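(* Let $f_0:\mathbb{R}^n\to\mathbb{R}$ be lower semicontinuous, proper and strictly convex, let $\mathcal{Y}\subseteq\mathbb{R}^n$ be convex and compact, let $f=f_0+\delta_{\mathcal{Y}}$, and let $\mathbf{A}\in\mathbb{R}^{m\times n}$ with $m<n$ and $\operatorname{rank}\mathbf{A}=m$, and $\mathbf{b}\in\mathbb{R}^m$. Assume that for every $\bar{\mathbf{y}}\in\operatorname{bnd}\mathcal{Y}$ there exist a sequence $(\mathbf{y}_k)$ in $\mathcal{Y}$ with $\mathbf{y}_k\to\bar{\mathbf{y}}$ and subgradients $\boldsymbol{\nu}_k\in\partial f(\mathbf{y}_k)$ with $\limsup_k\|\boldsymbol{\nu}_k\|_2<\infty$. Let $\mathcal{V}=\operatorname{cl}\{\boldsymbol{\nu}\in\partial f_0(\mathbf{y}) \;|\; \mathbf{y}\in\operatorname{int}\mathcal{Y}\}$, and assume there exist $\boldsymbol{\nu}\in\mathbb{R}^n\setminus\operatorname{int}\mathcal{V}$ and $\boldsymbol{\eta}\in\mathbb{R}^n$ such that for all $\alpha\ge0$: $\boldsymbol{\nu}+\alpha\boldsymbol{\eta}\in\mathbb{R}^n\setminus\operatorname{int}\mathcal{V}$, $\nabla f^*(\boldsymbol{\nu}+\alpha\boldsymbol{\eta})$ does not depend on $\alpha$, and the ray $\{\boldsymbol{\nu}+\alpha\boldsymbol{\eta}\mid\alpha\ge0\}$ is contained in the range $R(\mathbf{A}^{\mathsf T})$ of $\mathbf{A}^{\mathsf T}$. Let $g:\mathbb{R}^m\to\mathbb{R}$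 be the dual function $$g(\boldsymbol{\lambda})=\inf_{\mathbf{y}\in\mathbb{R}^n}\big(f(\mathbf{y})-\boldsymbol{\lambda}^{\mathsf T}(\mathbf{A}\mathbf{y}-\mathbf{b})\big)=-f^*(\mathbf{A}^{\mathsf T}\boldsymbol{\lambda})+\mathbf{b}^{\mathsf T}\boldsymbol{\lambda}.$$ Then there exist $\boldsymbol{\lambda}\in\mathbb{R}^m$ and $\boldsymbol{\mu}\in\mathbb{R}^m$ such that $\nabla g(\boldsymbol{\lambda}+\alpha\boldsymbol{\mu})$ is the same vector for all $\alpha\ge0$.
   Context: $\delta_{\mathcal{Y}}$ is the indicator function of $\mathcal{Y}$; $f^*(\boldsymbol{\nu})=\sup_{\mathbf{x}\in\operatorname{dom}f}(\boldsymbol{\nu}^{\mathsf T}\mathbf{x}-f(\mathbf{x}))$ is the convex conjugate of $f$, which under these hypotheses is finite and differentiable on $\mathbb{R}^n$ (so $g$ is differentiable). $\partial$ is the convex subdifferential; $\operatorname{cl},\operatorname{int},\operatorname{bnd}$ denote closure, interior, boundary. *)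

theory Defs
  imports "HOL-Analysis.Analysis"
begin

definition lsc :: "('a::topological_space \<Rightarrow> real) \<Rightarrow> bool" where
  "lsc f \<longleftrightarrow> (\<forall>x. \<forall>t. t < f x \<longrightarrow> (\<forall>\<^sub>F y in at x. t < f y))"

definition strictly_convex_on :: "'a::real_vector set \<Rightarrow> ('a \<Rightarrow> real) \<Rightarrow> bool" where
  "strictly_convex_on S f \<longleftrightarrow> convex S \<and>
    (\<forall>x\<in>S. \<forall>y\<in>S. x \<noteq> y \<longrightarrow> (\<forall>u. 0 < u \<and> u < 1 \<longrightarrow>
       f (u *\<^sub>R x + (1 - u) *\<^sub>R y) < u * f x + (1 - u) * f y))"

definition subdiff :: "('a::real_inner \<Rightarrow> real) \<Rightarrow> 'a \<Rightarrow> 'a set" where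
  "subdiff f y = {\<nu>. \<forall>x. f y + \<nu> \<bullet> (x - y) \<le> f x}"

text \<open>Subdifferential of f = f0 + indicator(Y) at a point y (empty outside Y).\<close>
definition subdiff_ind :: "('a::real_inner \<Rightarrow> real) \<Rightarrow> 'a set \<Rightarrow> 'a \<Rightarrow> 'a set" where
  "subdiff_ind f0 Y y = (if y \<in> Y then {\<nu>. \<forall>x\<in>Y. f0 y + \<nu> \<bullet> (x - y) \<le> f0 x} else {})"

text \<open>Convex conjugate of f = f0 + indicator(Y): sup over dom f = Y.\<close>
definition conj_ind :: "('a::real_inner \<Rightarrow> real) \<Rightarrow> 'a set \<Rightarrow> 'a \<Rightarrow> real" where
  "conj_ind f0 Y \<nu> = (SUP x\<in>Y. \<nu> \<bullet> x - f0 x)"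

definition dual_fun :: "(real^'n \<Rightarrow> real) \<Rightarrow> (real^'n) set \<Rightarrow> real^'n^'m \<Rightarrow> real^'m \<Rightarrow> real^'m \<Rightarrow> real" where
  "dual_fun f0 Y A b l = (INF y\<in>Y. f0 y - l \<bullet> (A *v y - b))"

end

theory Submission
  imports Defs
begin

text \<open>On a compact domain the dual function is \<open>g \<lambda> = b \<bullet> \<lambda> - f\<^sup>*(A\<^sup>T \<lambda>)\<close>.
  A ray \<open>\<nu> + \<alpha> \<eta>\<close> in the range of \<open>A\<^sup>T\<close> is the image of a ray \<open>\<lambda> + \<alpha> \<mu>\<close>, with
  \<open>\<mu> \<noteq> 0\<close> because \<open>\<eta> \<noteq> 0\<close>, and by the chain rule
  \<open>\<nabla>g(\<lambda> + \<alpha> \<mu>) = b - A \<nabla>f\<^sup>*(\<nu> + \<alpha> \<eta>)\<close>, which is constant along that ray.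
  Only convexity of \<open>f\<^sub>0\<close> (giving continuity), compactness of \<open>Y\<close> and the ray
  hypothesis are needed.\<close>

lemma strictly_convex_on_imp_convex_on:
  fixes f :: "'a::real_vector \<Rightarrow> real"
  assumes "strictly_convex_on S f"
  shows "convex_on S f"
  unfolding convex_on_alt
proof (intro conjI ballI allI impI)
  show "convex S"
    using assms by (simp add: strictly_convex_on_def)
next
  fix x y and u :: real
  assume "x \<in> S" "y \<in> S" and u: "0 \<le> u \<and> u \<le> 1"
  consider "x = y" | "u = 0" | "u = 1" | "x \<noteq> y" "0 < u" "u < 1"
    using u by linarith
  then show "f (u *\<^sub>R x + (1 - u) *\<^sub>R y) \<le> u * f x + (1 - u) * f y"
  proof cases
    case 1
    then show ?thesis by (simp add: algebra_simps)
  next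
    case 4
    then show ?thesis
      using assms \<open>x \<in> S\<close> \<open>y \<in> S\<close> unfolding strictly_convex_on_def by fastforce
  qed auto
qed

lemma cINF_const_diff:
  fixes h :: "'a \<Rightarrow> real"
  assumes "bdd_above (h ` Y)" "Y \<noteq> {}"
  shows "(INF y\<in>Y. c - h y) = c - (SUP y\<in>Y. h y)"
proof -
  from assms(1) obtain M where "\<forall>y\<in>Y. h y \<le> M"
    by (auto simp: bdd_above_def)
  then have "bdd_above ((\<lambda>y. h y - c) ` Y)"
    by (intro bdd_aboveI[of _ "M - c"]) auto
  then have "(INF y\<in>Y. - (h y - c)) = - (SUP y\<in>Y. h y - c)"
    using uminus_cSUP assms(2) by metis
  moreover have "(SUP y\<in>Y. h y - c) = (SUP y\<in>Y. h y) - c"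
    using Sup_add_eq[OF assms, of "- c"] by simp
  ultimately show ?thesis by simp
qed

lemma dual_fun_eq_conj_ind:
  fixes f0 :: "real^'n \<Rightarrow> real" and A :: "real^'n^'m"
  assumes "continuous_on Y f0" and "compact Y" and "Y \<noteq> {}"
  shows "dual_fun f0 Y A b l = b \<bullet> l - conj_ind f0 Y (transpose A *v l)"
proof -
  let ?h = "\<lambda>y. (transpose A *v l) \<bullet> y - f0 y"
  have "continuous_on Y ?h"
    by (intro continuous_intros assms(1))
  then have bdd: "bdd_above (?h ` Y)"
    using \<open>compact Y\<close>
    by (simp add: compact_continuous_image bounded_imp_bdd_above compact_imp_bounded)
  have "f0 y - l \<bullet> (A *v y - b) = b \<bullet> l - ?h y" for y
    using dot_lmul_matrix[of l A y] by (simp add: inner_diff_right inner_commute[of l b])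
  then have "dual_fun f0 Y A b l = (INF y\<in>Y. b \<bullet> l - ?h y)"
    unfolding dual_fun_def by presburger
  also have "\<dots> = b \<bullet> l - (SUP y\<in>Y. ?h y)"
    by (rule cINF_const_diff[OF bdd \<open>Y \<noteq> {}\<close>])
  finally show ?thesis
    unfolding conj_ind_def .
qed

lemma dual_fun_has_derivative:
  fixes f0 :: "real^'n \<Rightarrow> real" and A :: "real^'n^'m"
  assumes "continuous_on Y f0" and "compact Y" and "Y \<noteq> {}"
    and conj_deriv: "(conj_ind f0 Y has_derivative (\<lambda>h. d \<bullet> h)) (at (transpose A *v l))"
  shows "(dual_fun f0 Y A b has_derivative (\<lambda>h. (b - A *v d) \<bullet> h)) (at l)"
proof -
  have "((\<lambda>x. conj_ind f0 Y (transpose A *v x)) has_derivative (\<lambda>h. d \<bullet> (transpose A *v h))) (at l)"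
    using has_derivative_compose[OF
        bounded_linear_imp_has_derivative[OF matrix_vector_mul_bounded_linear] conj_deriv]
    by simp
  then have "((\<lambda>x. b \<bullet> x - conj_ind f0 Y (transpose A *v x))
      has_derivative (\<lambda>h. b \<bullet> h - d \<bullet> (transpose A *v h))) (at l)"
    by (intro derivative_intros)
  moreover have "(\<lambda>h. b \<bullet> h - d \<bullet> (transpose A *v h)) = (\<lambda>h. (b - A *v d) \<bullet> h)"
  proof
    fix h
    have "d \<bullet> (transpose A *v h) = (A *v d) \<bullet> h"
      by (metis dot_lmul_matrix vector_transpose_matrix inner_commute)
    then show "b \<bullet> h - d \<bullet> (transpose A *v h) = (b - A *v d) \<bullet> h"
      by (simp add: inner_diff_left inner_diff_right inner_commute)
  qed
  moreover have "dual_fun f0 Y A b = (\<lambda>x. b \<bullet> x - conj_ind f0 Y (transpose A *v x))"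
    using dual_fun_eq_conj_ind[OF assms(1-3)] by (intro ext)
  ultimately show ?thesis
    by simp
qed

lemma linear_ray_preimage:
  assumes "linear f" and "\<nu> \<in> range f" and "\<nu> + \<eta> \<in> range f"
  obtains l \<mu> where "f \<mu> = \<eta>" and "\<And>\<alpha>. f (l + \<alpha> *\<^sub>R \<mu>) = \<nu> + \<alpha> *\<^sub>R \<eta>"
proof -
  obtain l l1 where "f l = \<nu>" "f l1 = \<nu> + \<eta>"
    using assms(2,3) by (metis rangeE)
  then have "f (l1 - l) = \<eta>"
    using linear_diff[OF assms(1)] by simp
  with \<open>f l = \<nu>\<close> show ?thesis
    using that[of "l1 - l" l] by (simp add: linear_add[OF assms(1)] linear_scale[OF assms(1)])
qed

theorem corollary1:
  fixes f0 :: "real^'n \<Rightarrow> real"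
    and Y :: "(real^'n) set"
    and A :: "real^'n^'m"
    and b :: "real^'m"
  assumes f0_lsc: "lsc f0"
    and f0_strict: "strictly_convex_on UNIV f0"
    and Y_convex: "convex Y" and Y_compact: "compact Y" and Y_ne: "Y \<noteq> {}"
    and mn: "CARD('m) < CARD('n)"
    and rankA: "rank A = CARD('m)"
    and bnd: "\<forall>ybar\<in>frontier Y. \<exists>ys \<nu>s. (\<forall>k. ys k \<in> Y) \<and> ys \<longlonglongrightarrow> ybar \<and>
                 (\<forall>k. \<nu>s k \<in> subdiff_ind f0 Y (ys k)) \<and>
                 limsup (\<lambda>k. ereal (norm (\<nu>s k))) < \<infinity>"
    and ray: "\<exists>\<nu> \<eta>. \<eta> \<noteq> 0 \<and> (\<exists>d. \<forall>\<alpha>\<ge>(0::real).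
                 \<nu> + \<alpha> *\<^sub>R \<eta> \<notin> interior (closure {v. \<exists>y\<in>interior Y. v \<in> subdiff f0 y}) \<and>
                 (conj_ind f0 Y has_derivative (\<lambda>h. d \<bullet> h)) (at (\<nu> + \<alpha> *\<^sub>R \<eta>)) \<and>
                 \<nu> + \<alpha> *\<^sub>R \<eta> \<in> range (\<lambda>l. transpose A *v l))"
  shows "\<exists>l \<mu>. \<mu> \<noteq> 0 \<and> (\<exists>d. \<forall>\<alpha>\<ge>(0::real).
           (dual_fun f0 Y A b has_derivative (\<lambda>h. d \<bullet> h)) (at (l + \<alpha> *\<^sub>R \<mu>)))"
proof -
  obtain \<nu> \<eta> d where "\<eta> \<noteq> 0"
    and conj_deriv: "\<And>\<alpha>. \<alpha> \<ge> 0 \<Longrightarrow>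
      (conj_ind f0 Y has_derivative (\<lambda>h. d \<bullet> h)) (at (\<nu> + \<alpha> *\<^sub>R \<eta>))"
    and in_range: "\<And>\<alpha>. \<alpha> \<ge> 0 \<Longrightarrow> \<nu> + \<alpha> *\<^sub>R \<eta> \<in> range (\<lambda>l. transpose A *v l)"
    using ray by blast
  have "continuous_on UNIV f0"
    using convex_on_continuous[OF open_UNIV strictly_convex_on_imp_convex_on[OF f0_strict]] .
  then have f0_cont: "continuous_on Y f0"
    using continuous_on_subset by blast
  have "\<nu> \<in> range (\<lambda>l. transpose A *v l)" "\<nu> + \<eta> \<in> range (\<lambda>l. transpose A *v l)"
    using in_range[of 0] in_range[of 1] by simp_all
  then obtain l \<mu> where "transpose A *v \<mu> = \<eta>"
    and ray_image: "\<And>\<alpha>. transpose A *v (l + \<alpha> *\<^sub>R \<mu>) = \<nu> + \<alpha> *\<^sub>R \<eta>"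
    using linear_ray_preimage[OF matrix_vector_mul_linear] by metis
  then have "\<mu> \<noteq> 0"
    using \<open>\<eta> \<noteq> 0\<close> by auto
  moreover have "(dual_fun f0 Y A b has_derivative (\<lambda>h. (b - A *v d) \<bullet> h)) (at (l + \<alpha> *\<^sub>R \<mu>))"
    if "\<alpha> \<ge> 0" for \<alpha>
    using dual_fun_has_derivative[OF f0_cont Y_compact Y_ne] conj_deriv[OF that] ray_image
    by metis
  ultimately show ?thesis
    by blast
qed

end
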